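(* Let $p$ be a prime, $q$ a power of $p$, and $F$ a field of characteristic $p$ containing $\mathbb{F}_q$. Let $L\in F[x]$ be a monic $q$-polynomial of $q$-degree $n$ such that: (1) $L(x)/x$ is irreducible over $F$; (2) $L$ is not a $q^s$-polynomial for any integer $s>1$; (3) $L=x^{q^n}+a_{n-k}x^{q^{n-k}}+\cdots+a_0x$ with $1\leq k\leq n$ and $a_{n-k}\neq0$ (so the coefficients of $x^{q^{n-1}},\dots,x^{q^{n-k+1}}$ vanish). Let $V$ be the space of roots of $L$ in a splitting field $E$ of $L$ over $F$, and let $\alpha,\beta\in V$ be linearly independent over $\mathbb{F}_q$. If $d$ is a positive integer such that $\alpha^d,\alpha^{d-1}\beta,\dots,\beta^d$ are linearly dependent over $\mathbb{F}_q$, then $d\geq q^k+1$.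
   Context: A $q$-polynomial of $q$-degree $n$ is $\sum_{i=0}^n a_ix^{q^i}$ with $a_n\neq0$; it is a $q^s$-polynomial if only exponents $q^j$ with $s\mid j$ occur. *)

theory Defs
  imports "HOL-Computational_Algebra.Computational_Algebra"
begin

definition is_field_hom :: "('f::field \<Rightarrow> 'e::field) \<Rightarrow> bool" where
  "is_field_hom \<phi> \<longleftrightarrow> \<phi> 1 = 1 \<and> (\<forall>a b. \<phi> (a + b) = \<phi> a + \<phi> b) \<and> (\<forall>a b. \<phi> (a * b) = \<phi> a * \<phi> b)"

definition is_subfield :: "'e::field set \<Rightarrow> bool" where
  "is_subfield K \<longleftrightarrow> 0 \<in> K \<and> 1 \<in> K \<and> (\<forall>a\<in>K. \<forall>b\<in>K. a + b \<in> K \<and> a * b \<in> K \<and> - a \<in> K)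
      \<and> (\<forall>a\<in>K. a \<noteq> 0 \<longrightarrow> inverse a \<in> K)"

definition splits :: "'e::field poly \<Rightarrow> bool" where
  "splits P \<longleftrightarrow> (\<exists>rs. P = smult (lead_coeff P) (\<Prod>r\<leftarrow>rs. [:- r, 1:]))"

text \<open>E (the whole type 'e) is a splitting field of L over F, F embedded via \<phi>.\<close>
definition is_splitting_field :: "('f::field \<Rightarrow> 'e::field) \<Rightarrow> 'f poly \<Rightarrow> bool" where
  "is_splitting_field \<phi> L \<longleftrightarrow> is_field_hom \<phi> \<and> splits (map_poly \<phi> L) \<and>
     (\<forall>K. is_subfield K \<and> range \<phi> \<subseteq> K \<and> {x. poly (map_poly \<phi> L) x = 0} \<subseteq> K \<longrightarrow> K = UNIV)"

definition is_qs_poly :: "nat \<Rightarrow> nat \<Rightarrow> 'a::zero poly \<Rightarrow> bool" where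
  "is_qs_poly q s L \<longleftrightarrow> (\<forall>m. coeff L m \<noteq> 0 \<longrightarrow> (\<exists>j. s dvd j \<and> m = q ^ j))"

definition is_q_poly :: "nat \<Rightarrow> 'a::zero poly \<Rightarrow> bool" where
  "is_q_poly q L \<longleftrightarrow> is_qs_poly q 1 L"

text \<open>The copy of F_q inside a field: the roots of x^q - x.\<close>
definition Fq_in :: "nat \<Rightarrow> 'a::field set" where
  "Fq_in q = {c. c ^ q = c}"

definition contains_Fq :: "nat \<Rightarrow> 'a::field itself \<Rightarrow> bool" where
  "contains_Fq q _ \<longleftrightarrow> card (Fq_in q :: 'a set) = q"

end

theory Submission
  imports Defs "Jordan_Normal_Form.Char_Poly"
begin

(* Put \<gamma> = \<beta> / \<alpha>. The dependence of the \<alpha>^(d-i) \<beta>^i makes \<gamma> algebraic of degree e \<le> d over F.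
   Subtracting \<gamma>^(q^n) L(\<alpha>) from L(\<gamma> \<alpha>) = 0 gives a linearized relation
   \<Sum>_(j \<le> n-k) a_j (\<gamma>^(q^j) - \<gamma>^(q^n)) \<alpha>^(q^j) = 0 with coefficients in F[\<gamma>]. They are not all zero:
   otherwise \<gamma> is fixed by the powers q^(n-j) with a_j \<noteq> 0, hence by q^g for their gcd g, and
   since L is then a q^g-polynomial, g = 1 and \<gamma> \<in> F_q, contradicting independence. Dividing by \<alpha>,
   \<alpha> has degree at most q^(n-k) - 1 over F[\<gamma>], so at most e (q^(n-k) - 1) over F. As L(x)/x is
   irreducible, that degree is q^n - 1, and e \<le> q^k would give q^n - 1 \<le> q^n - q^k. *)

lemma field_hom_if_is_field_hom:
  assumes "is_field_hom \<phi>"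
  shows "field_hom \<phi>"
proof -
  have add: "\<phi> (a + b) = \<phi> a + \<phi> b" and mult: "\<phi> (a * b) = \<phi> a * \<phi> b" and "\<phi> 1 = 1" for a b
    using assms by (simp_all add: is_field_hom_def)
  moreover have "\<phi> 0 = 0"
    using add[of 0 0] by (metis add_cancel_right_right)
  ultimately show ?thesis
    by unfold_locales auto
qed

lemma poly_eq_sum_lessThan:
  fixes p :: "'a::comm_semiring_1 poly"
  assumes "\<And>i. n \<le> i \<Longrightarrow> coeff p i = 0"
  shows "poly p x = (\<Sum>i<n. coeff p i * x ^ i)"
proof -
  have "p = (\<Sum>i<n. monom (coeff p i) i)"
    by (rule poly_eqI) (auto simp: coeff_sum coeff_monom assms not_less)
  then show ?thesis
    by (metis (no_types, lifting) poly_monom poly_sum sum.cong)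
qed

lemma poly_q_poly:
  fixes L :: "'a::comm_semiring_1 poly"
  assumes "is_q_poly q L" and "degree L \<le> q ^ n" and "q > 1"
  shows "poly L x = (\<Sum>j\<le>n. coeff L (q ^ j) * x ^ q ^ j)"
proof -
  have "poly L x = (\<Sum>i<Suc (q ^ n). coeff L i * x ^ i)"
    using assms(2) by (intro poly_eq_sum_lessThan coeff_eq_0) simp
  also have "\<dots> = (\<Sum>i\<in>(\<lambda>j. q ^ j) ` {..n}. coeff L i * x ^ i)"
  proof (rule sum.mono_neutral_right)
    show "(\<lambda>j. q ^ j) ` {..n} \<subseteq> {..<Suc (q ^ n)}"
      using assms(3) by (auto intro!: le_imp_less_Suc power_increasing)
    show "\<forall>i\<in>{..<Suc (q ^ n)} - (\<lambda>j. q ^ j) ` {..n}. coeff L i * x ^ i = 0"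
    proof
      fix i assume i: "i \<in> {..<Suc (q ^ n)} - (\<lambda>j. q ^ j) ` {..n}"
      have "coeff L i = 0"
      proof (rule ccontr)
        assume "coeff L i \<noteq> 0"
        then obtain j where "i = q ^ j"
          using assms(1) by (auto simp: is_q_poly_def is_qs_poly_def)
        with i assms(3) show False
          by (auto simp: less_Suc_eq_le dest: power_le_imp_le_exp)
      qed
      then show "coeff L i * x ^ i = 0"
        by simp
    qed
  qed simp
  also have "\<dots> = (\<Sum>j\<le>n. coeff L (q ^ j) * x ^ q ^ j)"
    using assms(3) by (subst sum.reindex) (auto simp: inj_on_def)
  finally show ?thesis .
qed

lemma power_q_power_inj:
  fixes x y :: "'a::field"
  assumes "prime CHAR('a)" and "q = CHAR('a) ^ m" and "x ^ q ^ t = y ^ q ^ t"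
  shows "x = y"
proof -
  have "q ^ t = CHAR('a) ^ (m * t)"
    using assms(2) by (simp add: power_mult)
  then have "x ^ q ^ t = (x - y) ^ q ^ t + y ^ q ^ t"
    using freshmans_dream'[OF assms(1), of "q ^ t" "m * t" "x - y" y] by simp
  then show ?thesis
    using assms(3) by simp
qed

lemma Fq_in_uminus:
  fixes x :: "'a::field"
  assumes "prime CHAR('a)" and "q = CHAR('a) ^ m" and "x \<in> Fq_in q"
  shows "- x \<in> Fq_in q"
proof -
  have "q > 0"
    using assms(1,2) prime_gt_0_nat by simp
  have "x + (- x) ^ q = (x + - x) ^ q"
    using freshmans_dream'[OF assms(1,2), of x "- x"] assms(3) by (simp add: Fq_in_def)
  also have "\<dots> = 0"
    using \<open>q > 0\<close> by simp
  finally show ?thesis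
    by (simp add: Fq_in_def add_eq_0_iff)
qed

lemma Fq_independent_imp:
  fixes \<alpha> \<beta> :: "'a::field"
  assumes "prime CHAR('a)" and "q = CHAR('a) ^ m"
    and indep: "\<forall>a\<in>Fq_in q. \<forall>b\<in>Fq_in q. a * \<alpha> + b * \<beta> = 0 \<longrightarrow> a = 0 \<and> b = 0"
  shows "\<alpha> \<noteq> 0" and "(\<beta> / \<alpha>) ^ q \<noteq> \<beta> / \<alpha>"
proof -
  have "q > 0"
    using assms(1,2) prime_gt_0_nat by simp
  then have Fq: "(1::'a) \<in> Fq_in q" "(0::'a) \<in> Fq_in q" "(- 1::'a) \<in> Fq_in q"
    using Fq_in_uminus[OF assms(1,2), of 1] by (simp_all add: Fq_in_def)
  show \<alpha>_nonzero: "\<alpha> \<noteq> 0"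
  proof
    assume "\<alpha> = 0"
    then have "(1::'a) = 0 \<and> (0::'a) = 0"
      using indep[rule_format, OF Fq(1,2)] by simp
    then show False
      by simp
  qed
  show "(\<beta> / \<alpha>) ^ q \<noteq> \<beta> / \<alpha>"
  proof
    assume "(\<beta> / \<alpha>) ^ q = \<beta> / \<alpha>"
    then have "\<beta> / \<alpha> \<in> Fq_in q"
      by (simp add: Fq_in_def)
    moreover have "\<beta> / \<alpha> * \<alpha> + (- 1) * \<beta> = 0"
      using \<alpha>_nonzero by simp
    ultimately have "\<beta> / \<alpha> = 0 \<and> (- 1::'a) = 0"
      using indep[rule_format, OF _ Fq(3)] by blast
    then show False
      by simp
  qed
qed

lemma power_power_fixed_mult:
  fixes \<gamma> :: "'a::monoid_mult"
  assumes "\<gamma> ^ q ^ a = \<gamma>"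
  shows "\<gamma> ^ q ^ (a * k) = \<gamma>"
proof (induction k)
  case (Suc k)
  have "\<gamma> ^ q ^ (a * Suc k) = (\<gamma> ^ q ^ a) ^ q ^ (a * k)"
    by (simp only: mult_Suc_right power_add power_mult)
  then show ?case
    using assms Suc.IH by simp
qed simp

lemma power_power_fixed_gcd:
  fixes \<gamma> :: "'a::monoid_mult"
  shows "\<gamma> ^ q ^ a = \<gamma> \<Longrightarrow> \<gamma> ^ q ^ b = \<gamma> \<Longrightarrow> \<gamma> ^ q ^ gcd a b = \<gamma>"
proof (induction a b rule: gcd_nat_induct)
  case (step a b)
  have "q ^ a = q ^ (b * (a div b)) * q ^ (a mod b)"
    by (simp flip: power_add)
  then have "\<gamma> ^ q ^ a = (\<gamma> ^ q ^ (b * (a div b))) ^ q ^ (a mod b)"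
    by (simp only: power_mult)
  then have "\<gamma> ^ q ^ (a mod b) = \<gamma>"
    using step.prems power_power_fixed_mult[of \<gamma> q b] by simp
  then show ?case
    using step by (simp add: gcd_non_0_nat)
qed simp

lemma power_power_fixed_Gcd:
  fixes \<gamma> :: "'a::monoid_mult"
  assumes "finite S" and "\<And>t. t \<in> S \<Longrightarrow> \<gamma> ^ q ^ t = \<gamma>"
  shows "\<gamma> ^ q ^ Gcd S = \<gamma>"
  using assms by (induction S rule: finite_induct) (simp_all add: power_power_fixed_gcd)

lemma is_qs_poly_dvd: "is_qs_poly q g L \<Longrightarrow> s dvd g \<Longrightarrow> is_qs_poly q s L"
  unfolding is_qs_poly_def by (metis dvd_trans)

lemma power_q_fixed_of_q_poly:
  fixes L :: "'f::zero poly" and \<gamma> :: "'e::field"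
  assumes "prime CHAR('e)" and "q = CHAR('e) ^ m" and "q > 1"
    and "is_q_poly q L" and "degree L = q ^ n" and "coeff L 1 \<noteq> 0"
    and not_qs: "\<forall>s>1. \<not> is_qs_poly q s L"
    and agree: "\<And>j. j \<le> n \<Longrightarrow> coeff L (q ^ j) \<noteq> 0 \<Longrightarrow> \<gamma> ^ q ^ j = \<gamma> ^ q ^ n"
  shows "\<gamma> ^ q = \<gamma>"
proof -
  have exponent: "\<exists>j\<le>n. i = q ^ j" if "coeff L i \<noteq> 0" for i
  proof -
    have "\<exists>j. i = q ^ j"
      using assms(4) that by (simp add: is_q_poly_def is_qs_poly_def)
    then obtain j where "i = q ^ j" ..
    moreover have "i \<le> q ^ n"
      using le_degree[OF that] assms(5) by simp
    ultimately show ?thesis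
      using assms(3) power_le_imp_le_exp by blast
  qed
  define S where "S = (\<lambda>j. n - j) ` {j. j \<le> n \<and> coeff L (q ^ j) \<noteq> 0}"
  have "\<gamma> ^ q ^ t = \<gamma>" if t: "t \<in> S" for t
  proof -
    obtain j where j: "j \<le> n" "coeff L (q ^ j) \<noteq> 0" "t = n - j"
      using t by (auto simp: S_def)
    then have "(\<gamma> ^ q ^ t) ^ q ^ j = \<gamma> ^ q ^ j"
      using agree[OF j(1,2)] by (simp flip: power_mult power_add)
    then show ?thesis
      using power_q_power_inj[OF assms(1,2)] by blast
  qed
  then have fixed: "\<gamma> ^ q ^ Gcd S = \<gamma>"
    by (intro power_power_fixed_Gcd) (simp_all add: S_def)
  have "n \<in> S"
    using assms(6) by (force simp: S_def)
  have "is_qs_poly q (Gcd S) L"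
    unfolding is_qs_poly_def
  proof (intro allI impI)
    fix i assume "coeff L i \<noteq> 0"
    then obtain j where j: "j \<le> n" "i = q ^ j"
      using exponent by blast
    then have "n - j \<in> S"
      using \<open>coeff L i \<noteq> 0\<close> by (auto simp: S_def)
    then have "Gcd S dvd n" "Gcd S dvd n - j"
      using \<open>n \<in> S\<close> by (simp_all add: Gcd_dvd)
    then have "Gcd S dvd n - (n - j)"
      by (rule dvd_diff_nat)
    then show "\<exists>j. Gcd S dvd j \<and> i = q ^ j"
      using j by auto
  qed
  have "Gcd S = 1"
  proof (rule ccontr)
    assume "Gcd S \<noteq> 1"
    then consider "Gcd S = 0" | "Gcd S > 1"
      by linarith
    then show False
    proof cases
      case 1
      then have "is_qs_poly q 2 L"
        using is_qs_poly_dvd[OF \<open>is_qs_poly q (Gcd S) L\<close>, of 2] by (metis dvd_0_right)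
      then show False
        using not_qs by simp
    next
      case 2
      then show False
        using not_qs \<open>is_qs_poly q (Gcd S) L\<close> by blast
    qed
  qed
  then show ?thesis
    using fixed by simp
qed

lemma coeff_0_q_poly: "is_q_poly q L \<Longrightarrow> q \<noteq> 0 \<Longrightarrow> coeff L 0 = 0"
  by (auto simp: is_q_poly_def is_qs_poly_def)

lemma X_mult_div_X:
  fixes L :: "'a::field poly"
  assumes "coeff L 0 = 0"
  shows "[:0, 1:] * (L div [:0, 1:]) = L"
proof -
  have "[:0, 1:] dvd L"
    using assms by (simp add: dvd_iff_poly_eq_0 poly_0_coeff_0)
  then show ?thesis
    by (rule dvd_mult_div_cancel)
qed

lemma coeff_1_nonzero_if_irreducible_div_X:
  fixes L :: "'a::field poly"
  assumes "irreducible (L div [:0, 1:])" and "coeff L 0 = 0" and "degree L \<noteq> 2"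
  shows "coeff L 1 \<noteq> 0"
proof
  assume "coeff L 1 = 0"
  define Q where "Q = L div [:0, 1:]"
  have irr: "irreducible Q" and "Q \<noteq> 0"
    using assms(1) by (auto simp: Q_def)
  have L: "L = [:0, 1:] * Q"
    using X_mult_div_X[OF assms(2)] by (simp add: Q_def)
  then have "coeff Q 0 = 0"
    using \<open>coeff L 1 = 0\<close> by simp
  then have "[:0, 1:] dvd Q"
    by (simp add: dvd_iff_poly_eq_0 poly_0_coeff_0)
  then obtain W where W: "Q = [:0, 1:] * W"
    by (rule dvdE)
  have "\<not> is_unit [:0, 1::'a:]"
    by (simp add: is_unit_poly_iff)
  then have "is_unit W"
    using irreducibleD[OF irr W] by blast
  then have "degree Q = 1"
    using W \<open>Q \<noteq> 0\<close> by (auto simp: is_unit_iff_degree degree_mult_eq)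
  then show False
    using L \<open>Q \<noteq> 0\<close> assms(3) by (simp add: degree_mult_eq)
qed

lemma coeff_1_nonzero_of_irreducible_q_poly:
  fixes L :: "'a::field poly"
  assumes "irreducible (L div [:0, 1:])" and "is_q_poly q L" and "degree L = q ^ n" and "q > 1"
    and "1 \<le> k" and "coeff L (q ^ (n - k)) \<noteq> 0"
  shows "coeff L 1 \<noteq> 0"
proof (cases "q ^ n = 2")
  case True
  have "n = 1"
  proof (rule ccontr)
    assume "n \<noteq> 1"
    moreover have "n \<noteq> 0"
      using True by (intro notI) simp
    ultimately have "q ^ 2 \<le> q ^ n"
      using \<open>q > 1\<close> by (intro power_increasing) auto
    moreover have "2 * 2 \<le> q * q"
      using \<open>q > 1\<close> by (intro mult_le_mono) auto
    ultimately show False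
      using True by (simp add: power2_eq_square)
  qed
  then show ?thesis
    using assms(5,6) by simp
next
  case False
  then show ?thesis
    using coeff_1_nonzero_if_irreducible_div_X[OF assms(1) coeff_0_q_poly[OF assms(2)]] assms(3,4)
    by simp
qed

lemma power_mult_pred_less:
  fixes q :: nat
  assumes "q > 1" and "1 \<le> k" and "k \<le> n"
  shows "q ^ k * (q ^ (n - k) - 1) < q ^ n - 1"
proof -
  have "q ^ k * (q ^ (n - k) - 1) = q ^ n - q ^ k"
    using assms(3) by (simp add: right_diff_distrib' flip: power_add)
  moreover have "q ^ k \<le> q ^ n"
    using assms(1,3) by (simp add: power_increasing)
  moreover have "q ^ k > 1"
    using one_less_power[OF assms(1), of k] assms(2) by simp
  ultimately show ?thesis
    by linarith
qed

context field_hom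
begin

interpretation map_poly_hom: map_poly_idom_hom hom ..

interpretation V: vector_space "\<lambda>c y. hom c * y"
  by unfold_locales (simp_all add: algebra_simps hom_distribs)

lemma CHAR_eq: "CHAR('b) = CHAR('a)"
  by (rule CHAR_eqI) (auto simp flip: hom_of_nat simp: of_nat_eq_0_iff_char_dvd)

lemma Fq_in_eq_image:
  assumes card: "card (Fq_in q :: 'a set) = q" and "q > 1"
  shows "Fq_in q = hom ` Fq_in q"
proof -
  define P :: "'b poly" where "P = monom 1 q + [:0, -1:]"
  have deg: "degree P = q"
    unfolding P_def using \<open>q > 1\<close> by (subst degree_add_eq_left) (simp_all add: degree_monom_eq)
  then have "P \<noteq> 0"
    using \<open>q > 1\<close> by auto
  have roots: "Fq_in q = {y. poly P y = 0}"
    by (auto simp: P_def Fq_in_def poly_monom)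
  have "hom ` Fq_in q \<subseteq> Fq_in q"
    by (auto simp: Fq_in_def simp flip: hom_power)
  moreover have "card (hom ` Fq_in q) = q"
    using card by (simp add: card_image inj_on_def)
  moreover have "card (Fq_in q :: 'b set) \<le> q"
    using roots card_poly_roots_bound[OF \<open>P \<noteq> 0\<close>] deg by simp
  moreover have "finite (Fq_in q :: 'b set)"
    using roots poly_roots_finite[OF \<open>P \<noteq> 0\<close>] by simp
  ultimately show ?thesis
    by (metis card_seteq)
qed

lemma annihilator_below_irreducible_eq_0:
  assumes irr: "irreducible P" and "poly (map_poly hom P) x = 0"
  shows "degree f < degree P \<Longrightarrow> poly (map_poly hom f) x = 0 \<Longrightarrow> f = 0"
proof (induction "degree f" arbitrary: f rule: less_induct)
  \<comment> \<open>By minimal degree rather than Bezout: \<open>'a poly\<close> has no gcd instance for an arbitrary field \<open>'a\<close>.\<close>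
  case less
  show "f = 0"
  proof (rule ccontr)
    assume "f \<noteq> 0"
    have "poly (map_poly hom (P - P div f * f)) x = 0"
      using assms(2) less.prems(2) by (simp add: hom_distribs)
    then have "poly (map_poly hom (P mod f)) x = 0"
      by (simp only: minus_div_mult_eq_mod)
    moreover have "degree (P mod f) < degree f" if "P mod f \<noteq> 0"
      using degree_mod_less'[OF \<open>f \<noteq> 0\<close> that] .
    ultimately have "P mod f = 0"
      using less.hyps less.prems(1) by (meson less_trans)
    then have "f dvd P"
      by (simp add: mod_eq_0_iff_dvd)
    then obtain w where w: "P = f * w"
      by (rule dvdE)
    then consider "is_unit f" | "is_unit w"
      using irreducibleD[OF irr] by blast
    then show False
    proof cases
      case 1
      then have "degree f = 0"
        by (simp add: is_unit_iff_degree \<open>f \<noteq> 0\<close>)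
      then have "poly (map_poly hom f) x = hom (lead_coeff f)"
        by (simp add: poly_altdef)
      then show False
        using less.prems(2) \<open>f \<noteq> 0\<close> by simp
    next
      case 2
      then have "degree P = degree f"
        using w irr by (auto simp: is_unit_iff_degree degree_mult_eq)
      then show False
        using less.prems(1) by simp
    qed
  qed
qed

lemma annihilator_below_root_of_div_X_eq_0:
  assumes "irreducible (L div [:0, 1:])" and "coeff L 0 = 0"
    and "poly (map_poly hom L) x = 0" and "x \<noteq> 0"
    and "degree f < degree L - 1" and "poly (map_poly hom f) x = 0"
  shows "f = 0"
proof -
  define Q where "Q = L div [:0, 1:]"
  have irr: "irreducible Q" and "Q \<noteq> 0"
    using assms(1) by (auto simp: Q_def)
  have L: "L = [:0, 1:] * Q"
    using X_mult_div_X[OF assms(2)] by (simp add: Q_def)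
  have "poly (map_poly hom L) x = x * poly (map_poly hom Q) x"
    unfolding L by (simp add: hom_distribs)
  then have "poly (map_poly hom Q) x = 0"
    using assms(3,4) by simp
  moreover have "degree Q = degree L - 1"
    using L \<open>Q \<noteq> 0\<close> by (simp add: degree_mult_eq)
  ultimately show ?thesis
    using annihilator_below_irreducible_eq_0[OF irr] assms(5,6) by simp
qed

lemma homogeneous_relation_annihilator:
  assumes "\<And>i. i \<le> d \<Longrightarrow> c i \<in> range hom" and "\<exists>i\<le>d. c i \<noteq> 0"
    and "(\<Sum>i\<le>d. c i * \<alpha> ^ (d - i) * \<beta> ^ i) = 0" and "\<alpha> \<noteq> 0"
  obtains C where "C \<noteq> 0" and "degree C \<le> d" and "poly (map_poly hom C) (\<beta> / \<alpha>) = 0"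
proof
  define C where "C = (\<Sum>i\<le>d. monom (inv_into UNIV hom (c i)) i)"
  have hom_inv: "hom (inv_into UNIV hom (c i)) = c i" if "i \<le> d" for i
    using assms(1) that by (simp add: f_inv_into_f)
  have coeff_C: "coeff C i = (if i \<le> d then inv_into UNIV hom (c i) else 0)" for i
    by (simp add: C_def coeff_sum coeff_monom)
  show "C \<noteq> 0"
    using assms(2) coeff_C hom_inv by (metis coeff_0 hom_zero)
  show "degree C \<le> d"
    by (rule degree_le) (simp add: coeff_C)
  have "\<alpha> ^ d * poly (map_poly hom C) (\<beta> / \<alpha>) = (\<Sum>i\<le>d. \<alpha> ^ d * (c i * (\<beta> / \<alpha>) ^ i))"
    by (simp add: C_def hom_distribs poly_sum poly_monom hom_inv sum_distrib_left)
  also have "\<dots> = (\<Sum>i\<le>d. c i * \<alpha> ^ (d - i) * \<beta> ^ i)"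
  proof (rule sum.cong)
    fix i assume "i \<in> {..d}"
    then have "\<alpha> ^ d = \<alpha> ^ (d - i) * \<alpha> ^ i"
      by (simp flip: power_add)
    then show "\<alpha> ^ d * (c i * (\<beta> / \<alpha>) ^ i) = c i * \<alpha> ^ (d - i) * \<beta> ^ i"
      using \<open>\<alpha> \<noteq> 0\<close> by (simp add: power_divide)
  qed simp
  finally show "poly (map_poly hom C) (\<beta> / \<alpha>) = 0"
    using assms(3,4) by simp
qed

lemma linearized_relation_of_roots:
  assumes "is_q_poly q L" and "degree L = q ^ n" and "q > 1"
    and gap: "\<And>j. n - k < j \<Longrightarrow> j < n \<Longrightarrow> coeff L (q ^ j) = 0"
    and "poly (map_poly hom L) \<alpha> = 0" and "poly (map_poly hom L) (\<gamma> * \<alpha>) = 0"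
  shows "(\<Sum>j\<le>n - k. hom (coeff L (q ^ j)) * (\<gamma> ^ q ^ j - \<gamma> ^ q ^ n) * \<alpha> ^ q ^ j) = 0"
proof -
  have eval: "poly (map_poly hom L) y = (\<Sum>j\<le>n. hom (coeff L (q ^ j)) * y ^ q ^ j)" for y
    using poly_q_poly[of q "map_poly hom L" n y] assms(1-3)
    by (simp add: is_q_poly_def is_qs_poly_def)
  have "(\<Sum>j\<le>n - k. hom (coeff L (q ^ j)) * (\<gamma> ^ q ^ j - \<gamma> ^ q ^ n) * \<alpha> ^ q ^ j)
      = (\<Sum>j\<le>n. hom (coeff L (q ^ j)) * (\<gamma> ^ q ^ j - \<gamma> ^ q ^ n) * \<alpha> ^ q ^ j)"
  proof (rule sum.mono_neutral_left)
    show "\<forall>j\<in>{..n} - {..n - k}. hom (coeff L (q ^ j)) * (\<gamma> ^ q ^ j - \<gamma> ^ q ^ n) * \<alpha> ^ q ^ j = 0"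
    proof
      fix j assume "j \<in> {..n} - {..n - k}"
      then consider "j = n" | "n - k < j" "j < n"
        by fastforce
      then show "hom (coeff L (q ^ j)) * (\<gamma> ^ q ^ j - \<gamma> ^ q ^ n) * \<alpha> ^ q ^ j = 0"
        by cases (simp_all add: gap)
    qed
  qed auto
  also have "\<dots> = (\<Sum>j\<le>n. hom (coeff L (q ^ j)) * (\<gamma> * \<alpha>) ^ q ^ j
                          - \<gamma> ^ q ^ n * (hom (coeff L (q ^ j)) * \<alpha> ^ q ^ j))"
    by (rule sum.cong) (simp_all add: power_mult_distrib algebra_simps)
  also have "\<dots> = poly (map_poly hom L) (\<gamma> * \<alpha>) - \<gamma> ^ q ^ n * poly (map_poly hom L) \<alpha>"
    unfolding eval by (simp only: sum_subtractf sum_distrib_left)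
  finally show ?thesis
    using assms(5,6) by simp
qed

lemma mult_in_span:
  assumes "\<And>g. g \<in> S \<Longrightarrow> c * g \<in> V.span T" and "y \<in> V.span S"
  shows "c * y \<in> V.span T"
  using assms(2)
proof (induction rule: V.span_induct_alt)
  case (step a g y)
  have "c * (hom a * g + y) = hom a * (c * g) + c * y"
    by (simp add: algebra_simps)
  then show ?case
    using step assms(1) by (simp add: V.span_add V.span_scale)
qed (simp add: V.span_zero)

lemma scaled_powers_independent:
  assumes indep: "\<And>f. degree f < D \<Longrightarrow> poly (map_poly hom f) x = 0 \<Longrightarrow> f = 0"
    and "c \<noteq> 0"
  shows "inj_on (\<lambda>s. c * x ^ s) {..<D}" and "V.independent ((\<lambda>s. c * x ^ s) ` {..<D})"
proof -
  show inj: "inj_on (\<lambda>s. c * x ^ s) {..<D}"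
  proof (rule inj_onI)
    fix s t assume st: "s \<in> {..<D}" "t \<in> {..<D}" "c * x ^ s = c * x ^ t"
    have "monom 1 s - monom 1 t = (0 :: 'a poly)"
    proof (rule indep)
      have "degree (monom (1::'a) s) < D" "degree (monom (1::'a) t) < D"
        using st(1,2) by (simp_all add: degree_monom_eq)
      then show "degree (monom (1::'a) s - monom 1 t) < D"
        by (rule degree_diff_less)
      show "poly (map_poly hom (monom (1::'a) s - monom 1 t)) x = 0"
        using st(3) \<open>c \<noteq> 0\<close> by (simp add: hom_distribs poly_monom)
    qed
    then show "s = t"
      by (metis coeff_monom diff_self eq_iff_diff_eq_0 one_neq_zero)
  qed
  have coeffs_0: "u s = 0" if "(\<Sum>s<D. hom (u s) * x ^ s) = 0" "s < D" for u s
  proof -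
    define f where "f = (\<Sum>s<D. monom (u s) s)"
    have coeff_f: "coeff f i = (if i < D then u i else 0)" for i
      by (simp add: f_def coeff_sum coeff_monom)
    have "degree f \<le> D - 1"
      by (rule degree_le) (auto simp: coeff_f)
    moreover have "poly (map_poly hom f) x = 0"
      using that(1) by (simp add: f_def hom_distribs poly_sum poly_monom)
    ultimately have "f = 0"
      using \<open>s < D\<close> by (intro indep) auto
    then show ?thesis
      using coeff_f[of s] \<open>s < D\<close> by simp
  qed
  show "V.independent ((\<lambda>s. c * x ^ s) ` {..<D})"
  proof
    assume "V.dependent ((\<lambda>s. c * x ^ s) ` {..<D})"
    then obtain u v where v: "v \<in> (\<lambda>s. c * x ^ s) ` {..<D}" "u v \<noteq> 0"
      and sum: "(\<Sum>v\<in>(\<lambda>s. c * x ^ s) ` {..<D}. hom (u v) * v) = 0"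
      by (auto simp: V.dependent_finite)
    have "c * (\<Sum>s<D. hom (u (c * x ^ s)) * x ^ s) = 0"
      using sum by (simp add: sum.reindex[OF inj] sum_distrib_left algebra_simps)
    then have "u (c * x ^ s) = 0" if "s < D" for s
      using coeffs_0[of "\<lambda>s. u (c * x ^ s)"] \<open>c \<noteq> 0\<close> that by simp
    with v show False
      by auto
  qed
qed

lemma degree_le_card_mult:
  assumes R_mult: "\<And>r r'. r \<in> R \<Longrightarrow> r' \<in> R \<Longrightarrow> r * r' \<in> R"
    and "1 \<in> R"
    and G: "finite G" "G \<subseteq> R" "R \<subseteq> V.span G"
    and b: "b \<in> R" "b \<noteq> 0"
    and rel: "b * x ^ N = (\<Sum>i\<in>I. r i * x ^ ex i)"
    and rel_coeffs: "\<And>i. i \<in> I \<Longrightarrow> r i \<in> R \<and> ex i < N"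
    and indep: "\<And>f. degree f < D \<Longrightarrow> poly (map_poly hom f) x = 0 \<Longrightarrow> f = 0"
  shows "D \<le> card G * N"
proof -
  define M where "M = (\<lambda>(g, s). g * x ^ s) ` (G \<times> {..<N})"
  have "N > 0"
  proof (rule ccontr)
    assume "\<not> N > 0"
    then have "I = {}"
      using rel_coeffs by auto
    then show False
      using rel b(2) \<open>\<not> N > 0\<close> by simp
  qed
  have R_in_span: "r * x ^ s \<in> V.span M" if "r \<in> R" "s < N" for r s
  proof -
    have "x ^ s * g \<in> V.span M" if "g \<in> G" for g
    proof -
      have "g * x ^ s \<in> M"
        unfolding M_def using \<open>g \<in> G\<close> \<open>s < N\<close> by (intro image_eqI[of _ _ "(g, s)"]) auto
      then show ?thesis
        by (metis V.span_base mult.commute)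
    qed
    then have "x ^ s * r \<in> V.span M"
      by (rule mult_in_span) (use G(3) \<open>r \<in> R\<close> in auto)
    then show ?thesis
      by (metis mult.commute)
  qed
  have shift: "b * x * z \<in> V.span M" if "z \<in> V.span M" for z
  proof (rule mult_in_span[OF _ that])
    fix y assume "y \<in> M"
    then obtain g s where gs: "g \<in> G" "s < N" "y = g * x ^ s"
      by (auto simp: M_def)
    have "g \<in> R"
      using G(2) gs(1) by blast
    show "b * x * y \<in> V.span M"
    proof (cases "Suc s < N")
      case True
      have "b * x * y = (b * g) * x ^ Suc s"
        by (simp add: gs(3) algebra_simps)
      also have "\<dots> \<in> V.span M"
        by (rule R_in_span[OF R_mult[OF b(1) \<open>g \<in> R\<close>] True])
      finally show ?thesis .
    next
      case False
      then have "Suc s = N"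
        using gs(2) by simp
      then have "b * x * y = g * (b * x ^ N)"
        by (auto simp: gs(3) algebra_simps)
      also have "\<dots> = (\<Sum>i\<in>I. (g * r i) * x ^ ex i)"
        by (simp add: rel sum_distrib_left mult.assoc)
      also have "\<dots> \<in> V.span M"
      proof (rule V.span_sum)
        fix i assume "i \<in> I"
        then have "r i \<in> R" "ex i < N"
          using rel_coeffs by auto
        then show "g * r i * x ^ ex i \<in> V.span M"
          using R_in_span R_mult \<open>g \<in> R\<close> by simp
      qed
      finally show ?thesis .
    qed
  qed
  have b_power: "b ^ i \<in> R" for i
    by (induction i) (simp_all add: R_mult b(1) \<open>1 \<in> R\<close>)
  have powers_in_span: "b ^ i * x ^ s \<in> V.span M" if "s < N + i" for i s
    using that
  proof (induction i arbitrary: s)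
    case 0
    then show ?case
      using R_in_span[OF \<open>1 \<in> R\<close>] by simp
  next
    case (Suc i)
    show ?case
    proof (cases s)
      case 0
      then show ?thesis
        using R_in_span[OF b_power[of "Suc i"] \<open>N > 0\<close>] by simp
    next
      case (Suc s')
      then have "b * x * (b ^ i * x ^ s') \<in> V.span M"
        using Suc.IH Suc.prems shift by simp
      then show ?thesis
        using Suc by (simp add: algebra_simps)
    qed
  qed
  \<comment> \<open>\<open>b\<close> need not be invertible in \<open>R\<close>, so \<open>x ^ s\<close> itself may leave the span for \<open>s \<ge> N\<close>;
     the scaled powers \<open>b ^ D * x ^ s\<close>, \<open>s < D\<close>, stay inside it and are still independent.\<close>
  define T where "T = (\<lambda>s. b ^ D * x ^ s) ` {..<D}"
  have "T \<subseteq> V.span M"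
    using powers_in_span by (auto simp: T_def)
  moreover have "finite M"
    using G(1) by (simp add: M_def)
  moreover have "b ^ D \<noteq> 0"
    using b(2) by (rule power_not_zero)
  moreover have "V.independent T"
    unfolding T_def using scaled_powers_independent(2)[OF indep \<open>b ^ D \<noteq> 0\<close>] .
  ultimately have "card T \<le> card M"
    using V.independent_span_bound by blast
  moreover have "card T = D"
    unfolding T_def using scaled_powers_independent(1)[OF indep \<open>b ^ D \<noteq> 0\<close>]
    by (simp add: card_image)
  moreover have "card M \<le> card G * N"
    unfolding M_def using card_image_le[of "G \<times> {..<N}"] G(1)
    by (simp add: card_cartesian_product)
  ultimately show ?thesis
    by linarith
qed

definition ring_adjoin :: "'b \<Rightarrow> 'b set" where
  "ring_adjoin \<gamma> = range (\<lambda>f. poly (map_poly hom f) \<gamma>)"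

lemma ring_adjoin_closed:
  shows "hom a \<in> ring_adjoin \<gamma>" and "\<gamma> ^ t \<in> ring_adjoin \<gamma>"
    and "y \<in> ring_adjoin \<gamma> \<Longrightarrow> - y \<in> ring_adjoin \<gamma>"
    and "y \<in> ring_adjoin \<gamma> \<Longrightarrow> z \<in> ring_adjoin \<gamma> \<Longrightarrow> y - z \<in> ring_adjoin \<gamma>"
    and "y \<in> ring_adjoin \<gamma> \<Longrightarrow> z \<in> ring_adjoin \<gamma> \<Longrightarrow> y * z \<in> ring_adjoin \<gamma>"
proof -
  show "hom a \<in> ring_adjoin \<gamma>"
    unfolding ring_adjoin_def by (rule range_eqI[of _ _ "monom a 0"]) (simp add: poly_monom)
  show "\<gamma> ^ t \<in> ring_adjoin \<gamma>"
    unfolding ring_adjoin_def by (rule range_eqI[of _ _ "monom 1 t"]) (simp add: poly_monom)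
  show "- y \<in> ring_adjoin \<gamma>" if y: "y \<in> ring_adjoin \<gamma>"
  proof -
    obtain f where f: "y = poly (map_poly hom f) \<gamma>"
      using y unfolding ring_adjoin_def by blast
    show ?thesis
      unfolding ring_adjoin_def f by (rule range_eqI[of _ _ "- f"]) (simp add: hom_distribs)
  qed
  show "y - z \<in> ring_adjoin \<gamma>" "y * z \<in> ring_adjoin \<gamma>"
    if y: "y \<in> ring_adjoin \<gamma>" and z: "z \<in> ring_adjoin \<gamma>"
  proof -
    obtain f where f: "y = poly (map_poly hom f) \<gamma>"
      using y unfolding ring_adjoin_def by blast
    obtain g where g: "z = poly (map_poly hom g) \<gamma>"
      using z unfolding ring_adjoin_def by blast
    show "y - z \<in> ring_adjoin \<gamma>"
      unfolding ring_adjoin_def f g by (rule range_eqI[of _ _ "f - g"]) (simp add: hom_distribs)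
    show "y * z \<in> ring_adjoin \<gamma>"
      unfolding ring_adjoin_def f g by (rule range_eqI[of _ _ "f * g"]) (simp add: hom_distribs)
  qed
qed

lemma ring_adjoin_subset_span:
  assumes "C \<noteq> 0" and "poly (map_poly hom C) \<gamma> = 0"
  shows "ring_adjoin \<gamma> \<subseteq> V.span ((\<lambda>t. \<gamma> ^ t) ` {..<degree C})"
proof
  fix y assume "y \<in> ring_adjoin \<gamma>"
  then obtain f where "y = poly (map_poly hom f) \<gamma>"
    by (auto simp: ring_adjoin_def)
  also have "\<dots> = poly (map_poly hom (f div C * C + f mod C)) \<gamma>"
    by simp
  also have "\<dots> = poly (map_poly hom (f mod C)) \<gamma>"
    using assms(2) by (simp only: hom_distribs poly_add poly_mult) simp
  also have "\<dots> = (\<Sum>t<degree C. hom (coeff (f mod C) t) * \<gamma> ^ t)"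
  proof -
    have "coeff (f mod C) i = 0" if "degree C \<le> i" for i
    proof (cases "f mod C = 0")
      case False
      then have "degree (f mod C) < i"
        using degree_mod_less'[OF assms(1) False] that by simp
      then show ?thesis
        by (rule coeff_eq_0)
    qed simp
    then show ?thesis
      by (subst poly_eq_sum_lessThan[of "degree C"]) simp_all
  qed
  also have "\<dots> \<in> V.span ((\<lambda>t. \<gamma> ^ t) ` {..<degree C})"
    by (intro V.span_sum V.span_scale V.span_base) auto
  finally show "y \<in> V.span ((\<lambda>t. \<gamma> ^ t) ` {..<degree C})" .
qed

lemma degree_bound_over_ring_adjoin:
  assumes "C \<noteq> 0" and "poly (map_poly hom C) \<gamma> = 0"
    and "b \<in> ring_adjoin \<gamma>" and "b \<noteq> 0"
    and "b * x ^ N = (\<Sum>i\<in>I. r i * x ^ ex i)"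
    and "\<And>i. i \<in> I \<Longrightarrow> r i \<in> ring_adjoin \<gamma> \<and> ex i < N"
    and "\<And>f. degree f < D \<Longrightarrow> poly (map_poly hom f) x = 0 \<Longrightarrow> f = 0"
  shows "D \<le> degree C * N"
proof -
  let ?G = "(\<lambda>t. \<gamma> ^ t) ` {..<degree C}"
  have "D \<le> card ?G * N"
    using assms(3-7) ring_adjoin_subset_span[OF assms(1,2)] ring_adjoin_closed(1)[of 1 \<gamma>]
    by (intro degree_le_card_mult[where R = "ring_adjoin \<gamma>"]) (auto simp: ring_adjoin_closed)
  also have "\<dots> \<le> degree C * N"
    using card_image_le[of "{..<degree C}" "\<lambda>t. \<gamma> ^ t"] by simp
  finally show ?thesis .
qed

lemma degree_bound_of_linearized_relation:
  assumes "C \<noteq> 0" and "poly (map_poly hom C) \<gamma> = 0"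
    and B: "\<And>j. B j \<in> ring_adjoin \<gamma>"
    and rel: "(\<Sum>j\<le>m. B j * x ^ q ^ j) = 0" and nontrivial: "\<exists>j\<le>m. B j \<noteq> 0"
    and "x \<noteq> 0" and "q > 1"
    and indep: "\<And>f. degree f < D \<Longrightarrow> poly (map_poly hom f) x = 0 \<Longrightarrow> f = 0"
  shows "D \<le> degree C * (q ^ m - 1)"
proof -
  define j0 where "j0 = Max {j. j \<le> m \<and> B j \<noteq> 0}"
  have j0: "j0 \<le> m" "B j0 \<noteq> 0"
    using Max_in[of "{j. j \<le> m \<and> B j \<noteq> 0}"] nontrivial by (auto simp: j0_def)
  have above_j0: "B j = 0" if "j0 < j" "j \<le> m" for j
  proof (rule ccontr)
    assume "B j \<noteq> 0"
    then have "j \<le> j0"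
      unfolding j0_def using that(2) by (intro Max_ge) auto
    with that(1) show False
      by simp
  qed
  \<comment> \<open>Dividing the relation by \<open>x\<close> is what turns the bound \<open>q ^ m\<close> into \<open>q ^ m - 1\<close>.\<close>
  have "x * (\<Sum>j\<le>j0. B j * x ^ (q ^ j - 1)) = (\<Sum>j\<le>j0. B j * (x * x ^ (q ^ j - 1)))"
    by (simp add: sum_distrib_left mult.left_commute)
  also have "\<dots> = (\<Sum>j\<le>j0. B j * x ^ q ^ j)"
  proof (rule sum.cong)
    fix j
    have "Suc (q ^ j - 1) = q ^ j"
      using \<open>q > 1\<close> by simp
    then show "B j * (x * x ^ (q ^ j - 1)) = B j * x ^ q ^ j"
      by (metis power_Suc)
  qed simp
  also have "\<dots> = (\<Sum>j\<le>m. B j * x ^ q ^ j)"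
    using j0(1) above_j0 by (intro sum.mono_neutral_left) auto
  finally have "(\<Sum>j\<le>j0. B j * x ^ (q ^ j - 1)) = 0"
    using rel \<open>x \<noteq> 0\<close> by simp
  then have "B j0 * x ^ (q ^ j0 - 1) = (\<Sum>j<j0. - B j * x ^ (q ^ j - 1))"
    by (simp add: sum_negf lessThan_Suc_atMost[symmetric] eq_neg_iff_add_eq_0 add.commute)
  moreover have "q ^ j - 1 < q ^ j0 - 1" if "j < j0" for j
    using \<open>q > 1\<close> that by (simp add: diff_less_mono power_strict_increasing)
  ultimately have "D \<le> degree C * (q ^ j0 - 1)"
    using assms(1,2) B j0(2) indep
    by (intro degree_bound_over_ring_adjoin[where I = "{..<j0}" and r = "\<lambda>j. - B j"
          and ex = "\<lambda>j. q ^ j - 1"]) (auto simp: ring_adjoin_closed)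
  also have "\<dots> \<le> degree C * (q ^ m - 1)"
    using j0(1) \<open>q > 1\<close> by (simp add: diff_le_mono power_increasing)
  finally show ?thesis .
qed

lemma degree_bound_of_roots:
  assumes "prime CHAR('b)" and "q = CHAR('b) ^ m" and "q > 1"
    and L: "is_q_poly q L" "degree L = q ^ n" "coeff L 1 \<noteq> 0" "\<forall>s>1. \<not> is_qs_poly q s L"
    and gap: "\<forall>j. 1 \<le> j \<and> j < k \<longrightarrow> coeff L (q ^ (n - j)) = 0"
    and roots: "poly (map_poly hom L) \<alpha> = 0" "poly (map_poly hom L) (\<gamma> * \<alpha>) = 0"
    and "\<alpha> \<noteq> 0" and "\<gamma> ^ q \<noteq> \<gamma>"
    and C: "C \<noteq> 0" "poly (map_poly hom C) \<gamma> = 0"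
    and indep: "\<And>f. degree f < D \<Longrightarrow> poly (map_poly hom f) \<alpha> = 0 \<Longrightarrow> f = 0"
  shows "D \<le> degree C * (q ^ (n - k) - 1)"
proof -
  have gap': "coeff L (q ^ j) = 0" if "n - k < j" "j < n" for j
  proof -
    have "1 \<le> n - j \<and> n - j < k"
      using that by linarith
    then show ?thesis
      using gap \<open>j < n\<close> by fastforce
  qed
  define B where "B j = hom (coeff L (q ^ j)) * (\<gamma> ^ q ^ j - \<gamma> ^ q ^ n)" for j
  have rel: "(\<Sum>j\<le>n - k. B j * \<alpha> ^ q ^ j) = 0"
    using linearized_relation_of_roots[OF L(1,2) \<open>q > 1\<close> gap' roots] by (simp add: B_def)
  have nontrivial: "\<exists>j\<le>n - k. B j \<noteq> 0"
  proof (rule ccontr)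
    assume trivial: "\<not> (\<exists>j\<le>n - k. B j \<noteq> 0)"
    have "\<gamma> ^ q ^ j = \<gamma> ^ q ^ n" if "j \<le> n" "coeff L (q ^ j) \<noteq> 0" for j
    proof (cases "j \<le> n - k")
      case True
      then show ?thesis
        using trivial that(2) by (auto simp: B_def)
    next
      case False
      then show ?thesis
        using gap' that by (cases "j = n") auto
    qed
    then have "\<gamma> ^ q = \<gamma>"
      by (rule power_q_fixed_of_q_poly[OF assms(1-3) L])
    with \<open>\<gamma> ^ q \<noteq> \<gamma>\<close> show False
      by simp
  qed
  have "B j \<in> ring_adjoin \<gamma>" for j
    unfolding B_def by (intro ring_adjoin_closed)
  then show ?thesis
    by (rule degree_bound_of_linearized_relation[OF C _ rel nontrivial \<open>\<alpha> \<noteq> 0\<close> \<open>q > 1\<close> indep])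
qed

end

theorem theorem7p8:
  fixes p q n k d :: nat
    and L :: "'f::field poly"
    and \<phi> :: "'f \<Rightarrow> 'e::field"
    and \<alpha> \<beta> :: 'e
  assumes p_prime: "prime p"
    and q_pow: "\<exists>m>0. q = p ^ m"
    and char_F: "CHAR('f) = p"
    and Fq_sub: "contains_Fq q TYPE('f)"
    and qpoly: "is_q_poly q L"
    and qdeg: "degree L = q ^ n"
    and monic: "lead_coeff L = 1"
    and irred: "irreducible (L div [:0, 1:])"
    and not_qs: "\<forall>s::nat. s > 1 \<longrightarrow> \<not> is_qs_poly q s L"
    and k_range: "1 \<le> k" "k \<le> n"
    and gap: "\<forall>j. 1 \<le> j \<and> j < k \<longrightarrow> coeff L (q ^ (n - j)) = 0"
    and a_nk: "coeff L (q ^ (n - k)) \<noteq> 0"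
    and split: "is_splitting_field \<phi> L"
    and \<alpha>_root: "poly (map_poly \<phi> L) \<alpha> = 0"
    and \<beta>_root: "poly (map_poly \<phi> L) \<beta> = 0"
    and lin_indep: "\<forall>a\<in>Fq_in q. \<forall>b\<in>Fq_in q. a * \<alpha> + b * \<beta> = 0 \<longrightarrow> a = 0 \<and> b = 0"
    and d_pos: "d > 0"
    and dep: "\<exists>c::nat \<Rightarrow> 'e. (\<forall>i\<le>d. c i \<in> Fq_in q) \<and> (\<exists>i\<le>d. c i \<noteq> 0) \<and>
                 (\<Sum>i\<le>d. c i * \<alpha> ^ (d - i) * \<beta> ^ i) = 0"
  shows "d \<ge> q ^ k + 1"
proof (rule ccontr)
  assume "\<not> d \<ge> q ^ k + 1"
  interpret \<phi>: field_hom \<phi>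
    using split by (simp add: is_splitting_field_def field_hom_if_is_field_hom)
  have char: "prime CHAR('e)" "CHAR('e) = p"
    using p_prime char_F \<phi>.CHAR_eq by simp_all
  obtain m where m: "q = CHAR('e) ^ m" "m > 0"
    using q_pow char(2) by auto
  have "q > 1"
    using one_less_power[OF prime_gt_1_nat[OF char(1)] m(2)] m(1) by simp
  define \<gamma> where "\<gamma> = \<beta> / \<alpha>"
  have "\<alpha> \<noteq> 0" and "\<gamma> ^ q \<noteq> \<gamma>"
    unfolding \<gamma>_def by (rule Fq_independent_imp[OF char(1) m(1) lin_indep])+
  obtain c where c: "\<forall>i\<le>d. c i \<in> Fq_in q" "\<exists>i\<le>d. c i \<noteq> 0"
    "(\<Sum>i\<le>d. c i * \<alpha> ^ (d - i) * \<beta> ^ i) = 0"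
    using dep by blast
  have "Fq_in q = \<phi> ` Fq_in q"
    using Fq_sub \<open>q > 1\<close> by (simp add: contains_Fq_def \<phi>.Fq_in_eq_image)
  then have "c i \<in> range \<phi>" if "i \<le> d" for i
    using c(1) that by auto
  then obtain C where C: "C \<noteq> 0" "degree C \<le> d" "poly (map_poly \<phi> C) \<gamma> = 0"
    using \<phi>.homogeneous_relation_annihilator[OF _ c(2,3) \<open>\<alpha> \<noteq> 0\<close>] unfolding \<gamma>_def by blast
  have "coeff L 0 = 0"
    using coeff_0_q_poly[OF qpoly] \<open>q > 1\<close> by simp
  have indep: "\<And>f. degree f < q ^ n - 1 \<Longrightarrow> poly (map_poly \<phi> f) \<alpha> = 0 \<Longrightarrow> f = 0"
    using \<phi>.annihilator_below_root_of_div_X_eq_0[OF irred \<open>coeff L 0 = 0\<close> \<alpha>_root \<open>\<alpha> \<noteq> 0\<close>] qdeg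
    by simp
  have "poly (map_poly \<phi> L) (\<gamma> * \<alpha>) = 0"
    using \<beta>_root \<open>\<alpha> \<noteq> 0\<close> by (simp add: \<gamma>_def)
  then have "q ^ n - 1 \<le> degree C * (q ^ (n - k) - 1)"
    by (rule \<phi>.degree_bound_of_roots[OF char(1) m(1) \<open>q > 1\<close> qpoly qdeg
        coeff_1_nonzero_of_irreducible_q_poly[OF irred qpoly qdeg \<open>q > 1\<close> k_range(1) a_nk]
        not_qs gap \<alpha>_root _ \<open>\<alpha> \<noteq> 0\<close> \<open>\<gamma> ^ q \<noteq> \<gamma>\<close> C(1,3) indep])
  also have "\<dots> \<le> q ^ k * (q ^ (n - k) - 1)"
    using C(2) \<open>\<not> d \<ge> q ^ k + 1\<close> by simp
  also have "\<dots> < q ^ n - 1"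
    by (rule power_mult_pred_less[OF \<open>q > 1\<close> k_range])
  finally show False
    by simp
qed

end
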